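(* Let $k \geq 1$ and $p \geq 2$ be integers. Then for every $\ell = 0, \dots, k-1$, $$\sum_{m=0}^{p-1} \beta_{m,\ell} = p\, \alpha_\ell ,$$ where $\alpha_\ell$ and $\beta_{m,\ell}$ are the coefficients defined in the context below.
   Context: For an integer $j \geq 0$ define the polynomials $$\gamma_j(\xi) = (-1)^j \int_0^{\xi} \binom{-s}{j}\, ds, \qquad \widetilde\gamma_j(\xi) = \frac{d}{d\xi}\gamma_j(\xi) = (-1)^j \binom{-\xi}{j} = \frac{\xi(\xi+1)\cdots(\xi+j-1)}{j!},$$ where $\binom{x}{j} = x(x-1)\cdots(x-j+1)/j!$ for real $x$ (and $\widetilde\gamma_0 \equiv 1$). The coefficients of the classical $k$-step Adams–Bashforth method are $$\alpha_\ell = (-1)^\ell \sum_{i=\ell}^{k-1} \binom{i}{\ell}\, \gamma_i(1), \qquad \ell = 0,\dots,k-1,$$ so that the $k$-step Adams–Bashforth scheme for $y' = By$ reads $y_{n+1} = y_n + \Delta t\, B \sum_{\ell=0}^{k-1}\alpha_\ell y_{n-\ell}$ (e.g. $k=2$: $\alpha = (3/2,-1/2)$; $k=3$: $\alpha=(23/12,-16/12,5/12)$). For $m = 0,\dots,p-1$ and $\ell = 0,\dots,k-1$ the local time-stepping coefficients are $$\beta_{m,\ell} = \sum_{i=0}^{k-1} \alpha_i \sum_{j=\ell}^{k-1} (-1)^\ell \binom{j}{\ell}\, \widetilde\gamma_j\!\left(\frac{m-i}{p}\right).$$ *)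

theory Defs
  imports "HOL-Analysis.Analysis"
begin

definition gam :: "nat \<Rightarrow> real \<Rightarrow> real" where
  "gam j xi = (-1) ^ j * (LBINT s=0..xi. ((- s) gchoose j))"

definition gamt :: "nat \<Rightarrow> real \<Rightarrow> real" where
  "gamt j xi = (-1) ^ j * ((- xi) gchoose j)"

definition AB_alpha :: "nat \<Rightarrow> nat \<Rightarrow> real" where
  "AB_alpha k l = (-1) ^ l * (\<Sum>i=l..k-1. real (i choose l) * gam i 1)"

definition LTS_beta :: "nat \<Rightarrow> nat \<Rightarrow> nat \<Rightarrow> nat \<Rightarrow> real" where
  "LTS_beta k p m l = (\<Sum>i=0..k-1. AB_alpha k i *
      (\<Sum>j=l..k-1. (-1) ^ l * real (j choose l) * gamt j ((real m - real i) / real p)))"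

end

theory Submission
  imports Defs "HOL-Computational_Algebra.Polynomial"
begin

text \<open>
  The functions gamt j are the polynomials x(x+1)...(x+j-1)/j! of degree j, hence a basis
  of the polynomials of degree less than k.  On this basis one checks, by binomial inversion,
  that the Adams-Bashforth rule q \<mapsto> sum_i alpha_i q(-i) integrates exactly over [0,1];
  by linearity it is exact for all polynomials of degree less than k.

  By definition beta_{m,l} = sum_i alpha_i h_l((m-i)/p) for the polynomial
  h_l = sum_j (-1)^l C(j,l) gamt_j of degree less than k, whose integral over [0,1] is alpha_l.
  Summing over m gives the Adams-Bashforth rule applied to Q(x) = sum_m h_l((m+x)/p), again of
  degree less than k; hence the sum equals the integral of Q over [0,1], which after the
  substitution y = (m+s)/p on each substep equals p times the integral of h_l, i.e. p alpha_l.
\<close>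

definition gamt_poly :: "nat \<Rightarrow> real poly" where
  "gamt_poly r = smult (1 / fact r) (\<Prod>i<r. [:real i, 1:])"

lemma poly_gamt_poly: "poly (gamt_poly r) x = gamt r x"
  by (simp add: gamt_poly_def poly_prod gamt_def gbinomial_pochhammer pochhammer_prod
      lessThan_atLeast0 add.commute flip: power_add)

lemma degree_gamt_poly: "degree (gamt_poly r) = r"
  and lead_coeff_gamt_poly: "lead_coeff (gamt_poly r) = 1 / fact r"
proof -
  have "degree (\<Prod>i<r. [:real i, 1:]) = r"
    by (subst degree_prod_eq_sum_degree) auto
  moreover have "lead_coeff (\<Prod>i<r. [:real i, 1:]) = 1"
    by (simp add: lead_coeff_prod)
  ultimately show "degree (gamt_poly r) = r" "lead_coeff (gamt_poly r) = 1 / fact r"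
    by (simp_all add: gamt_poly_def)
qed

lemma gamt_poly_basis:
  assumes "degree q \<le> d"
  shows "\<exists>c. q = (\<Sum>r\<le>d. smult (c r) (gamt_poly r))"
  using assms
proof (induction d arbitrary: q)
  case 0
  then have "q = smult (coeff q 0) (gamt_poly 0)"
    by (simp add: gamt_poly_def degree_0_id)
  then show ?case by auto
next
  case (Suc d)
  define a where "a = coeff q (Suc d) * fact (Suc d)"
  define q' where "q' = q - smult a (gamt_poly (Suc d))"
  have "coeff q' i = 0" if "d < i" for i
  proof (cases "i = Suc d")
    case True
    then show ?thesis
      using lead_coeff_gamt_poly[of "Suc d"] by (simp add: q'_def a_def degree_gamt_poly)
  next
    case False
    with that Suc.prems show ?thesis
      by (simp add: q'_def coeff_eq_0 degree_gamt_poly)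
  qed
  then have "degree q' \<le> d"
    by (intro degree_le) auto
  then obtain c where "q' = (\<Sum>r\<le>d. smult (c r) (gamt_poly r))"
    using Suc.IH by blast
  then have "q = (\<Sum>r\<le>Suc d. smult ((c(Suc d := a)) r) (gamt_poly r))"
    by (simp add: q'_def algebra_simps)
  then show ?case by blast
qed

lemma gamt_neg_nat: "gamt r (- real i) = (-1) ^ r * real (i choose r)"
  by (simp add: gamt_def binomial_gbinomial)

lemma sum_triangle_swap:
  fixes n :: nat
  shows "(\<Sum>i\<le>n. \<Sum>j=i..n. f i j) = (\<Sum>j\<le>n. \<Sum>i\<le>j. f i j :: 'a :: comm_monoid_add)"
  by (induction n) (auto simp: sum.distrib atLeastAtMostSuc_conv add_ac)

lemma alternating_choose_orthogonality:
  "(\<Sum>i\<le>j. (-1::real) ^ i * real (j choose i) * real (i choose r)) = (if j = r then (-1) ^ r else 0)"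
proof (cases "r \<le> j")
  case False
  then show ?thesis by (auto intro!: sum.neutral)
next
  case True
  have "(\<Sum>i\<le>j. (-1::real) ^ i * real (j choose i) * real (i choose r))
      = (\<Sum>i\<in>{r..j}. (-1::real) ^ i * real (j choose r) * real ((j - r) choose (i - r)))"
    by (rule sum.mono_neutral_cong_right)
       (auto simp: choose_mult mult.assoc simp flip: of_nat_mult)
  also have "\<dots> = (\<Sum>t\<le>j - r. (-1::real) ^ (t + r) * real (j choose r) * real ((j - r) choose t))"
    using True by (intro sum.reindex_bij_witness[of _ "\<lambda>t. t + r" "\<lambda>i. i - r"]) auto
  also have "\<dots> = (-1) ^ r * real (j choose r) * (\<Sum>t\<le>j - r. (-1::real) ^ t * real ((j - r) choose t))"
    by (simp add: sum_distrib_left power_add mult_ac)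
  also have "\<dots> = (if j = r then (-1) ^ r else 0)"
    using True choose_alternating_sum[of "j - r", where 'a=real] by auto
  finally show ?thesis .
qed

lemma AB_alpha_exact_gamt:
  assumes "r < k"
  shows "(\<Sum>i=0..k-1. AB_alpha k i * gamt r (- real i)) = gam r 1"
proof -
  let ?n = "k - 1"
  have "(\<Sum>i=0..?n. AB_alpha k i * gamt r (- real i))
      = (\<Sum>i\<le>?n. \<Sum>j=i..?n. gam j 1 * (-1) ^ r * ((-1) ^ i * real (j choose i) * real (i choose r)))"
    by (simp add: atLeast0AtMost AB_alpha_def gamt_neg_nat sum_distrib_left sum_distrib_right mult_ac)
  also have "\<dots> = (\<Sum>j\<le>?n. gam j 1 * (-1) ^ r * (\<Sum>i\<le>j. (-1) ^ i * real (j choose i) * real (i choose r)))"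
    by (simp add: sum_triangle_swap sum_distrib_left)
  also have "\<dots> = (\<Sum>j\<le>?n. if j = r then gam j 1 else 0)"
    by (intro sum.cong refl) (simp add: alternating_choose_orthogonality flip: power_add)
  also have "\<dots> = gam r 1"
    using assms by simp
  finally show ?thesis .
qed

text \<open>Polynomials are integrable over every bounded interval, which makes the interval
  integral additive in the integrand and in the interval without side conditions.\<close>
lemma poly_interval_integrable:
  "interval_lebesgue_integrable lborel (ereal a) (ereal b) (poly P)"
  by (intro interval_integrable_isCont) auto

lemma interval_integral_poly_sum:
  "(LBINT s=ereal a..ereal b. poly (\<Sum>r\<in>A. P r) s) = (\<Sum>r\<in>A. LBINT s=ereal a..ereal b. poly (P r) s)"
proof (induction A rule: infinite_finite_induct)
  case (insert r A)
  then show ?case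
    using interval_lebesgue_integral_add(2)[OF poly_interval_integrable poly_interval_integrable]
    by (simp add: poly_add[symmetric] del: poly_add)
qed simp_all

lemma interval_integral_poly_telescope:
  "(\<Sum>m<n. LBINT y=ereal (x m)..ereal (x (Suc m)). poly P y) = (LBINT y=ereal (x 0)..ereal (x n). poly P y)"
proof (induction n)
  case (Suc n)
  then show ?case
    by (simp add: interval_integral_sum poly_interval_integrable min_def max_def)
qed simp

lemma interval_integral_poly_affine:
  assumes "d > 0"
  shows "(LBINT s=ereal 0..ereal 1. poly P (c + s / d)) = d * (LBINT y=ereal c..ereal (c + 1 / d). poly P y)"
proof -
  have "(LBINT s=ereal 0..ereal 1. (1 / d) *\<^sub>R poly P (c + s / d))
      = (LBINT y=ereal (c + 0 / d)..ereal (c + 1 / d). poly P y)"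
    using assms
    by (intro interval_integral_substitution_finite[where g="\<lambda>s. c + s / d" and g'="\<lambda>_. 1 / d"])
       (auto intro!: derivative_eq_intros continuous_intros)
  then show ?thesis
    using assms by (simp add: divide_eq_eq mult.commute)
qed

lemma sum_rescaled_integrals:
  assumes "p > 0"
  shows "(\<Sum>m<p. LBINT s=ereal 0..ereal 1. poly P (real m / real p + s / real p))
       = real p * (LBINT y=ereal 0..ereal 1. poly P y)"
proof -
  have "real m / real p + 1 / real p = real (Suc m) / real p" for m
    by (simp add: add_divide_distrib)
  then have "(\<Sum>m<p. LBINT s=ereal 0..ereal 1. poly P (real m / real p + s / real p))
      = real p * (\<Sum>m<p. LBINT y=ereal (real m / real p)..ereal (real (Suc m) / real p). poly P y)"
    using assms by (simp only: interval_integral_poly_affine of_nat_0_less_iff sum_distrib_left)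
  also have "\<dots> = real p * (LBINT y=ereal (real 0 / real p)..ereal (real p / real p). poly P y)"
    by (simp only: interval_integral_poly_telescope[where n=p and x="\<lambda>m. real m / real p"])
  finally show ?thesis
    using assms by simp
qed

lemma gam_one_integral: "gam r 1 = (LBINT s=ereal 0..ereal 1. poly (gamt_poly r) s)"
  by (simp add: poly_gamt_poly gamt_def gam_def zero_ereal_def one_ereal_def)

lemma AB_exact:
  assumes "k \<ge> 1" and "degree q \<le> k - 1"
  shows "(\<Sum>i=0..k-1. AB_alpha k i * poly q (- real i)) = (LBINT s=ereal 0..ereal 1. poly q s)"
proof -
  obtain c where q: "q = (\<Sum>r\<le>k-1. smult (c r) (gamt_poly r))"
    using gamt_poly_basis assms(2) by blast
  have "(\<Sum>i=0..k-1. AB_alpha k i * poly q (- real i))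
      = (\<Sum>r\<le>k-1. c r * (\<Sum>i=0..k-1. AB_alpha k i * gamt r (- real i)))"
    by (simp add: q poly_sum poly_gamt_poly sum_distrib_left mult_ac) (rule sum.swap)
  also have "\<dots> = (\<Sum>r\<le>k-1. c r * gam r 1)"
    using assms(1) by (intro sum.cong refl) (subst AB_alpha_exact_gamt, auto)
  also have "\<dots> = (LBINT s=ereal 0..ereal 1. poly q s)"
    by (simp add: q interval_integral_poly_sum gam_one_integral)
  finally show ?thesis .
qed

lemma LTS_exact:
  assumes "k \<ge> 1" and "p > 0" and "degree h \<le> k - 1"
  shows "(\<Sum>m<p. \<Sum>i=0..k-1. AB_alpha k i * poly h ((real m - real i) / real p))
       = real p * (LBINT y=ereal 0..ereal 1. poly h y)"
proof -
  define Q where "Q = (\<Sum>m<p. h \<circ>\<^sub>p [:real m / real p, 1 / real p:])"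
  have poly_Q: "poly Q x = (\<Sum>m<p. poly h (real m / real p + x / real p))" for x
    by (simp add: Q_def poly_sum poly_pcompose)
  have "degree Q \<le> k - 1"
    unfolding Q_def using assms(3)
    by (intro degree_sum_le) (auto simp: degree_pcompose intro: order_trans[OF mult_le_one])
  have "(\<Sum>m<p. \<Sum>i=0..k-1. AB_alpha k i * poly h ((real m - real i) / real p))
      = (\<Sum>i=0..k-1. AB_alpha k i * poly Q (- real i))"
    by (subst sum.swap) (simp add: poly_Q sum_distrib_left diff_divide_distrib)
  also have "\<dots> = (LBINT s=ereal 0..ereal 1. poly Q s)"
    using AB_exact[OF assms(1) \<open>degree Q \<le> k - 1\<close>] .
  also have "\<dots> = real p * (LBINT y=ereal 0..ereal 1. poly h y)"
    using assms(2) by (simp add: Q_def interval_integral_poly_sum poly_pcompose sum_rescaled_integrals)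
  finally show ?thesis .
qed

definition beta_poly :: "nat \<Rightarrow> nat \<Rightarrow> real poly" where
  "beta_poly k l = (\<Sum>j=l..k-1. smult ((-1) ^ l * real (j choose l)) (gamt_poly j))"

lemma poly_beta_poly:
  "poly (beta_poly k l) x = (\<Sum>j=l..k-1. (-1) ^ l * real (j choose l) * gamt j x)"
  by (simp add: beta_poly_def poly_sum poly_gamt_poly)

lemma degree_beta_poly: "degree (beta_poly k l) \<le> k - 1"
  unfolding beta_poly_def
  by (intro degree_sum_le) (auto simp: degree_gamt_poly)

lemma integral_beta_poly: "(LBINT y=ereal 0..ereal 1. poly (beta_poly k l) y) = AB_alpha k l"
  by (simp add: beta_poly_def interval_integral_poly_sum AB_alpha_def gam_one_integral
      sum_distrib_left mult_ac)

theorem mainTheorem1: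
  fixes k p l :: nat
  assumes "k \<ge> 1" and "p \<ge> 2" and "l \<le> k - 1"
  shows "(\<Sum>m=0..p-1. LTS_beta k p m l) = real p * AB_alpha k l"
proof -
  have "p > 0" using assms(2) by simp
  then have "{0..p-1} = {..<p}" by auto
  then have "(\<Sum>m=0..p-1. LTS_beta k p m l)
      = (\<Sum>m<p. \<Sum>i=0..k-1. AB_alpha k i * poly (beta_poly k l) ((real m - real i) / real p))"
    by (simp add: LTS_beta_def poly_beta_poly)
  also have "\<dots> = real p * AB_alpha k l"
    using LTS_exact[OF assms(1) \<open>p > 0\<close> degree_beta_poly] by (simp add: integral_beta_poly)
  finally show ?thesis .
qed

end
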